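(* Let $A$ be a finite direct product of elementary abelian groups, written additively, let $U$ be an $F$-relevant subgroup of $\mathrm{Aut}(A)$, let $N(U) = N_{\mathrm{Aut}(A)}(U)$, and let $\delta \in Z^2(U,A)$. Then restriction to $A$ defines an epimorphism \[ \eta : \mathrm{Aut}(G_\delta) \to \mathrm{Stab}_{N(U)}([\delta]),\quad \alpha \mapsto \alpha|_A, \] and $\ker(\eta) \cong Z^1(U,A)$.
   Context: $U$ acts on $A$ naturally, and $Z^1(U,A)$, $Z^2(U,A)$, $B^2(U,A)$, $H^2(U,A)$ are the groups of $1$-cocycles, $2$-cocycles, $2$-coboundaries and the second cohomology group for this action; $[\delta] = \delta + B^2(U,A)$. $G_\delta$ denotes the extension of $A$ by $U$ defined by $\delta$ (with $A$ identified with its canonical normal subgroup of $G_\delta$). The group $N(U)$ acts on $Z^2(U,A)$ by $(g(\delta))(u,v) = g\big(\delta(g^{-1}ug, g^{-1}vg)\big)$, inducing an action on $H^2(U,A)$ by $g([\delta]) = [g(\delta)]$. A subgroup $N \le \mathrm{Aut}(A)$ centralizes a series through $A$ if there is an $N$-invariant series $A = A_1 > \cdots > A_{l+1} = \{1\}$ with $N$ acting trivially on each $A_i/A_{i+1}$; $U\le\mathrm{Aut}(A)$ is $F$-relevant if no non-trivial normal subgroup of $U$ centralizes a series through $A$. *)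

theory Defs
  imports "HOL-Algebra.Algebra" "HOL-Computational_Algebra.Primes"
begin

(* Groups are HOL-Algebra monoid records; A is written multiplicatively here
   (the paper writes it additively). Aut(A) = AutoGroup A, whose elements are
   automorphisms (extensional on carrier A), multiplication = composition. *)

definition elementary_abelian :: "('a, 'b) monoid_scheme \<Rightarrow> bool" where
  "elementary_abelian G \<longleftrightarrow> comm_group G \<and>
     (\<exists>p::nat. Factorial_Ring.prime p \<and> (\<forall>x\<in>carrier G. x [^]\<^bsub>G\<^esub> p = \<one>\<^bsub>G\<^esub>))"

definition fin_prod_elem_abelian :: "('a, 'b) monoid_scheme \<Rightarrow> bool" where
  "fin_prod_elem_abelian A \<longleftrightarrow> comm_group A \<and> finite (carrier A) \<and>
     (\<exists>(n::nat) (H :: nat \<Rightarrow> 'a set).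
        (\<forall>i<n. subgroup (H i) A \<and> elementary_abelian (A\<lparr>carrier := H i\<rparr>)) \<and>
        A \<cong> product_group {..<n} (\<lambda>i. A\<lparr>carrier := H i\<rparr>))"

definition centralizes_series :: "('a, 'b) monoid_scheme \<Rightarrow> ('a \<Rightarrow> 'a) set \<Rightarrow> bool" where
  "centralizes_series A N \<longleftrightarrow>
     (\<exists>(l::nat) (S :: nat \<Rightarrow> 'a set).
        S 0 = carrier A \<and> S l = {\<one>\<^bsub>A\<^esub>} \<and>
        (\<forall>i\<le>l. subgroup (S i) A) \<and>
        (\<forall>i<l. S (Suc i) \<subset> S i) \<and>
        (\<forall>g\<in>N. \<forall>i\<le>l. g ` S i = S i) \<and>
        (\<forall>g\<in>N. \<forall>i<l. \<forall>a\<in>S i. g a \<otimes>\<^bsub>A\<^esub> inv\<^bsub>A\<^esub> a \<in> S (Suc i)))"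

definition F_relevant :: "('a, 'b) monoid_scheme \<Rightarrow> ('a \<Rightarrow> 'a) set \<Rightarrow> bool" where
  "F_relevant A U \<longleftrightarrow>
     (\<forall>N. N \<lhd> (AutoGroup A)\<lparr>carrier := U\<rparr> \<and> N \<noteq> {\<one>\<^bsub>AutoGroup A\<^esub>}
          \<longrightarrow> \<not> centralizes_series A N)"

definition NAut :: "('a, 'b) monoid_scheme \<Rightarrow> ('a \<Rightarrow> 'a) set \<Rightarrow> ('a \<Rightarrow> 'a) set" where
  "NAut A U = {g \<in> auto A.
     (\<lambda>u. g \<otimes>\<^bsub>AutoGroup A\<^esub> u \<otimes>\<^bsub>AutoGroup A\<^esub> inv\<^bsub>AutoGroup A\<^esub> g) ` U = U}"

definition Z1 :: "('a, 'b) monoid_scheme \<Rightarrow> ('a \<Rightarrow> 'a) set \<Rightarrow> (('a \<Rightarrow> 'a) \<Rightarrow> 'a) set" where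
  "Z1 A U = {f \<in> extensional U. f \<in> U \<rightarrow> carrier A \<and>
     (\<forall>u\<in>U. \<forall>v\<in>U. f (u \<otimes>\<^bsub>AutoGroup A\<^esub> v) = f u \<otimes>\<^bsub>A\<^esub> u (f v))}"

definition Z1_group :: "('a, 'b) monoid_scheme \<Rightarrow> ('a \<Rightarrow> 'a) set \<Rightarrow> (('a \<Rightarrow> 'a) \<Rightarrow> 'a) monoid" where
  "Z1_group A U = \<lparr>carrier = Z1 A U,
     monoid.mult = (\<lambda>f g. \<lambda>u\<in>U. f u \<otimes>\<^bsub>A\<^esub> g u),
     one = (\<lambda>u\<in>U. \<one>\<^bsub>A\<^esub>)\<rparr>"

definition Z2 :: "('a, 'b) monoid_scheme \<Rightarrow> ('a \<Rightarrow> 'a) set \<Rightarrow> (('a \<Rightarrow> 'a) \<Rightarrow> ('a \<Rightarrow> 'a) \<Rightarrow> 'a) set" where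
  "Z2 A U = {\<delta>. (\<forall>u\<in>U. \<forall>v\<in>U. \<delta> u v \<in> carrier A) \<and>
     (\<forall>u\<in>U. \<forall>v\<in>U. \<forall>w\<in>U.
        \<delta> u v \<otimes>\<^bsub>A\<^esub> \<delta> (u \<otimes>\<^bsub>AutoGroup A\<^esub> v) w
        = u (\<delta> v w) \<otimes>\<^bsub>A\<^esub> \<delta> u (v \<otimes>\<^bsub>AutoGroup A\<^esub> w))}"

definition cobound2 :: "('a, 'b) monoid_scheme \<Rightarrow> (('a \<Rightarrow> 'a) \<Rightarrow> 'a) \<Rightarrow> ('a \<Rightarrow> 'a) \<Rightarrow> ('a \<Rightarrow> 'a) \<Rightarrow> 'a" where
  "cobound2 A f u v = f u \<otimes>\<^bsub>A\<^esub> u (f v) \<otimes>\<^bsub>A\<^esub> inv\<^bsub>A\<^esub> (f (u \<otimes>\<^bsub>AutoGroup A\<^esub> v))"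

definition H2class :: "('a, 'b) monoid_scheme \<Rightarrow> ('a \<Rightarrow> 'a) set \<Rightarrow> (('a \<Rightarrow> 'a) \<Rightarrow> ('a \<Rightarrow> 'a) \<Rightarrow> 'a)
      \<Rightarrow> (('a \<Rightarrow> 'a) \<Rightarrow> ('a \<Rightarrow> 'a) \<Rightarrow> 'a) set" where
  "H2class A U \<delta> = {\<delta>' \<in> Z2 A U. \<exists>f \<in> U \<rightarrow> carrier A.
      \<forall>u\<in>U. \<forall>v\<in>U. \<delta>' u v = \<delta> u v \<otimes>\<^bsub>A\<^esub> cobound2 A f u v}"

definition act2 :: "('a, 'b) monoid_scheme \<Rightarrow> ('a \<Rightarrow> 'a) \<Rightarrow> (('a \<Rightarrow> 'a) \<Rightarrow> ('a \<Rightarrow> 'a) \<Rightarrow> 'a)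
      \<Rightarrow> ('a \<Rightarrow> 'a) \<Rightarrow> ('a \<Rightarrow> 'a) \<Rightarrow> 'a" where
  "act2 A g \<delta> u v = g (\<delta>
      (inv\<^bsub>AutoGroup A\<^esub> g \<otimes>\<^bsub>AutoGroup A\<^esub> u \<otimes>\<^bsub>AutoGroup A\<^esub> g)
      (inv\<^bsub>AutoGroup A\<^esub> g \<otimes>\<^bsub>AutoGroup A\<^esub> v \<otimes>\<^bsub>AutoGroup A\<^esub> g))"

definition Stab :: "('a, 'b) monoid_scheme \<Rightarrow> ('a \<Rightarrow> 'a) set \<Rightarrow> (('a \<Rightarrow> 'a) \<Rightarrow> ('a \<Rightarrow> 'a) \<Rightarrow> 'a)
      \<Rightarrow> ('a \<Rightarrow> 'a) set" where
  "Stab A U \<delta> = {g \<in> NAut A U. H2class A U (act2 A g \<delta>) = H2class A U \<delta>}"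

definition ext_group :: "('a, 'b) monoid_scheme \<Rightarrow> ('a \<Rightarrow> 'a) set \<Rightarrow> (('a \<Rightarrow> 'a) \<Rightarrow> ('a \<Rightarrow> 'a) \<Rightarrow> 'a)
      \<Rightarrow> ('a \<times> ('a \<Rightarrow> 'a)) monoid" where
  "ext_group A U \<delta> = \<lparr>carrier = carrier A \<times> U,
     monoid.mult = (\<lambda>(a, u) (b, v). (a \<otimes>\<^bsub>A\<^esub> u b \<otimes>\<^bsub>A\<^esub> \<delta> u v, u \<otimes>\<^bsub>AutoGroup A\<^esub> v)),
     one = (inv\<^bsub>A\<^esub> (\<delta> \<one>\<^bsub>AutoGroup A\<^esub> \<one>\<^bsub>AutoGroup A\<^esub>), \<one>\<^bsub>AutoGroup A\<^esub>)\<rparr>"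

definition ext_emb :: "('a, 'b) monoid_scheme \<Rightarrow> (('a \<Rightarrow> 'a) \<Rightarrow> ('a \<Rightarrow> 'a) \<Rightarrow> 'a) \<Rightarrow> 'a \<Rightarrow> 'a \<times> ('a \<Rightarrow> 'a)" where
  "ext_emb A \<delta> a = (a \<otimes>\<^bsub>A\<^esub> inv\<^bsub>A\<^esub> (\<delta> \<one>\<^bsub>AutoGroup A\<^esub> \<one>\<^bsub>AutoGroup A\<^esub>), \<one>\<^bsub>AutoGroup A\<^esub>)"

definition restr_A :: "('a, 'b) monoid_scheme \<Rightarrow> (('a \<Rightarrow> 'a) \<Rightarrow> ('a \<Rightarrow> 'a) \<Rightarrow> 'a)
      \<Rightarrow> ('a \<times> ('a \<Rightarrow> 'a) \<Rightarrow> 'a \<times> ('a \<Rightarrow> 'a)) \<Rightarrow> 'a \<Rightarrow> 'a" where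
  "restr_A A \<delta> \<alpha> = (\<lambda>a\<in>carrier A. inv_into (carrier A) (ext_emb A \<delta>) (\<alpha> (ext_emb A \<delta> a)))"

end

theory Submission
  imports Defs
begin

text \<open>
  The image \<open>M\<close> of \<open>A\<close> under an
  automorphism \<open>\<alpha>\<close> is an abelian normal subgroup, so its projection \<open>N\<close> to \<open>U\<close> is normal in \<open>U\<close>, and
  \<open>N\<close> acts trivially on \<open>B = M \<inter> A\<close> (as \<open>M\<close> is abelian) and on \<open>A/B\<close> (as \<open>M\<close> is normal). Thus \<open>N\<close>
  centralizes \<open>A \<ge> B \<ge> 1\<close>, \<open>F\<close>-relevance gives \<open>N = 1\<close>, i.e. \<open>M \<le> A\<close>, and finiteness gives \<open>M = A\<close>.
  So restriction to \<open>A\<close> is defined; \<open>g = \<alpha>|\<^sub>A\<close> normalizes \<open>U\<close>, and applying \<open>\<alpha>\<close> to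
  \<open>(1, u)(1, v) = \<iota>(\<delta>(u, v)) (1, uv)\<close> shows \<open>g(\<delta>) = \<delta> \<cdot> \<partial>k\<close>, so \<open>g\<close> stabilizes \<open>[\<delta>]\<close>.
  Conversely such a pair \<open>(g, k)\<close> defines an automorphism \<open>(a, u) \<mapsto> (g(a) k(gug\<^sup>-\<^sup>1), gug\<^sup>-\<^sup>1)\<close>
  restricting to \<open>g\<close>; for \<open>g = 1\<close> these are exactly the automorphisms \<open>(a, u) \<mapsto> (a k(u), u)\<close>
  with \<open>k \<in> Z\<^sup>1(U, A)\<close>, which form the kernel.
\<close>

lemma (in group) mult_inv_cancel_left [simp]:
  "x \<in> carrier G \<Longrightarrow> y \<in> carrier G \<Longrightarrow> x \<otimes> (inv x \<otimes> y) = y"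
  by (simp add: m_assoc[symmetric])

lemma (in group) inv_conj_conj:
  "g \<in> carrier G \<Longrightarrow> u \<in> carrier G \<Longrightarrow> inv g \<otimes> (g \<otimes> u \<otimes> inv g) \<otimes> g = u"
  by (simp add: m_assoc flip: m_assoc[of "inv g" g])

lemma (in group) conj_inv_conj:
  "g \<in> carrier G \<Longrightarrow> u \<in> carrier G \<Longrightarrow> g \<otimes> (inv g \<otimes> u \<otimes> g) \<otimes> inv g = u"
  using inv_conj_conj[of "inv g" u] by simp

lemma (in group) conj_mult:
  "g \<in> carrier G \<Longrightarrow> u \<in> carrier G \<Longrightarrow> v \<in> carrier G \<Longrightarrow>
   g \<otimes> (u \<otimes> v) \<otimes> inv g = (g \<otimes> u \<otimes> inv g) \<otimes> (g \<otimes> v \<otimes> inv g)"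
  by (simp add: m_assoc flip: m_assoc[of "inv g" g])

lemma (in group) eq_conj_if_mult_eq:
  "g \<in> carrier G \<Longrightarrow> u \<in> carrier G \<Longrightarrow> u' \<in> carrier G \<Longrightarrow> u' \<otimes> g = g \<otimes> u \<Longrightarrow> u' = g \<otimes> u \<otimes> inv g"
  by (metis inv_closed m_assoc r_inv r_one)

lemma carrier_AutoGroup: "carrier (AutoGroup G) = auto G"
  by (simp add: AutoGroup_def)

lemma mult_AutoGroup: "\<alpha> \<in> auto G \<Longrightarrow> \<beta> \<in> auto G \<Longrightarrow> \<alpha> \<otimes>\<^bsub>AutoGroup G\<^esub> \<beta> = compose (carrier G) \<alpha> \<beta>"
  by (simp add: AutoGroup_def BijGroup_def auto_def)

lemma (in group) auto_group_hom: "\<alpha> \<in> auto G \<Longrightarrow> group_hom G G \<alpha>"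
  by (simp add: auto_def group_hom_def group_hom_axioms_def)

lemma auto_image_carrier: "\<alpha> \<in> auto G \<Longrightarrow> \<alpha> ` carrier G = carrier G"
  by (simp add: auto_def Bij_def bij_betw_def)

lemma inj_on_auto: "\<alpha> \<in> auto G \<Longrightarrow> inj_on \<alpha> (carrier G)"
  by (simp add: auto_def Bij_def bij_betw_def)

lemma autoI:
  "\<alpha> \<in> hom G G \<Longrightarrow> inj_on \<alpha> (carrier G) \<Longrightarrow> \<alpha> ` carrier G = carrier G \<Longrightarrow> \<alpha> \<in> extensional (carrier G)
   \<Longrightarrow> \<alpha> \<in> auto G"
  by (simp add: auto_def Bij_def bij_betw_def)

lemma (in group) normal_auto_image:
  assumes \<alpha>: "\<alpha> \<in> auto G" and H: "H \<lhd> G"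
  shows "\<alpha> ` H \<lhd> G"
proof -
  interpret \<alpha>: group_hom G G \<alpha> by (rule auto_group_hom[OF \<alpha>])
  have H_sub: "H \<subseteq> carrier G" using H by (simp add: normal_def subgroup.subset)
  have "x \<otimes> \<alpha> h \<otimes> inv x \<in> \<alpha> ` H" if x: "x \<in> carrier G" and h: "h \<in> H" for x h
  proof -
    obtain z where z: "z \<in> carrier G" "x = \<alpha> z" using x auto_image_carrier[OF \<alpha>] by auto
    have "z \<otimes> h \<otimes> inv z \<in> H" using normal.inv_op_closed2[OF H z(1) h] .
    moreover have "\<alpha> (z \<otimes> h \<otimes> inv z) = x \<otimes> \<alpha> h \<otimes> inv x" using z h H_sub by auto
    ultimately show ?thesis by (metis image_eqI)
  qed
  moreover have "subgroup (\<alpha> ` H) G"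
    by (rule \<alpha>.subgroup_img_is_subgroup[OF normal_imp_subgroup[OF H]])
  ultimately show ?thesis by (auto simp: normal_inv_iff)
qed

text \<open>The series is \<open>G \<ge> B \<ge> 1\<close>, with repetitions removed.\<close>

lemma (in group) centralizes_series_by_subgroup:
  assumes B: "subgroup B G" and N: "N \<subseteq> auto G"
    and on_quotient: "\<And>g a. g \<in> N \<Longrightarrow> a \<in> carrier G \<Longrightarrow> g a \<otimes> inv a \<in> B"
    and on_subgroup: "\<And>g b. g \<in> N \<Longrightarrow> b \<in> B \<Longrightarrow> g b = b"
  shows "centralizes_series G N"
proof -
  have B_sub: "B \<subseteq> carrier G" "\<one> \<in> B" using B by (auto simp: subgroup.subset subgroup.one_closed)
  have inv_B: "g ` B = B" if "g \<in> N" for g using on_subgroup[OF that] by (auto simp: image_iff)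
  have inv_one: "g ` {\<one>} = {\<one>}" if "g \<in> N" for g
    using that N group_hom.hom_one[OF auto_group_hom] by auto
  have inv_G: "g ` carrier G = carrier G" if "g \<in> N" for g using that N auto_image_carrier[of g G] by auto
  show ?thesis
  proof (cases "carrier G = {\<one>}")
    case True
    show ?thesis unfolding centralizes_series_def
      by (rule exI[of _ 0], rule exI[of _ "\<lambda>_. carrier G"]) (use True inv_G subgroup_self in auto)
  next
    case nontrivial: False
    show ?thesis
    proof (cases "B = {\<one>} \<or> B = carrier G")
      case True
      have trivial: "g a \<otimes> inv a \<in> {\<one>}" if g: "g \<in> N" and a: "a \<in> carrier G" for g a
        using True on_quotient[OF g a] on_subgroup[OF g, of a] a by auto
      show ?thesis unfolding centralizes_series_def
        by (rule exI[of _ 1], rule exI[of _ "\<lambda>i. if i = 0 then carrier G else {\<one>}"])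
          (use nontrivial inv_G inv_one subgroup_self triv_subgroup trivial in \<open>auto simp: le_Suc_eq\<close>)
    next
      case False
      have strict: "B \<subset> carrier G" "{\<one>} \<subset> B" using False B_sub by auto
      have trivial: "g a \<otimes> inv a \<in> {\<one>}" if "g \<in> N" "a \<in> B" for g a
        using on_subgroup[OF that] that B_sub by auto
      show ?thesis unfolding centralizes_series_def
        by (rule exI[of _ 2], rule exI[of _ "\<lambda>i. if i = 0 then carrier G else if i = 1 then B else {\<one>}"])
          (use strict trivial inv_G inv_B inv_one subgroup_self triv_subgroup B on_quotient in
            \<open>auto simp: le_Suc_eq less_Suc_eq numeral_2_eq_2\<close>)
    qed
  qed
qed

locale cocycle_extension =
  fixes A :: "('a, 'b) monoid_scheme" (structure)
    and U :: "('a \<Rightarrow> 'a) set"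
    and \<delta> :: "('a \<Rightarrow> 'a) \<Rightarrow> ('a \<Rightarrow> 'a) \<Rightarrow> 'a"
  assumes comm_group_A: "comm_group A"
    and subgroup_U: "subgroup U (AutoGroup A)"
    and cocycle_\<delta>: "\<delta> \<in> Z2 A U"

sublocale cocycle_extension \<subseteq> comm_group A
  by (rule comm_group_A)

sublocale cocycle_extension \<subseteq> Aut: group "AutoGroup A"
  by (rule AutoGroup)

context cocycle_extension
begin

abbreviation "Aut \<equiv> AutoGroup A"
abbreviation "idA \<equiv> \<one>\<^bsub>Aut\<^esub>"
abbreviation "G\<delta> \<equiv> ext_group A U \<delta>"
abbreviation "\<iota> \<equiv> ext_emb A \<delta>"
abbreviation "\<delta>\<^sub>1 \<equiv> \<delta> idA idA"

lemma carrier_Aut: "carrier Aut = auto A"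
  by (rule carrier_AutoGroup)

lemma idA_apply [simp]: "a \<in> carrier A \<Longrightarrow> idA a = a"
  by (simp add: AutoGroup_def BijGroup_def)

lemma Aut_mult_apply: "u \<in> auto A \<Longrightarrow> v \<in> auto A \<Longrightarrow> a \<in> carrier A \<Longrightarrow> (u \<otimes>\<^bsub>Aut\<^esub> v) a = u (v a)"
  by (simp add: mult_AutoGroup compose_def)

lemma auto_closed [simp]: "u \<in> auto A \<Longrightarrow> a \<in> carrier A \<Longrightarrow> u a \<in> carrier A"
  unfolding auto_def by (blast intro: hom_in_carrier)

lemma auto_mult [simp]: "u \<in> auto A \<Longrightarrow> a \<in> carrier A \<Longrightarrow> b \<in> carrier A \<Longrightarrow> u (a \<otimes> b) = u a \<otimes> u b"
  by (simp add: auto_def hom_mult)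

lemma auto_one [simp]: "u \<in> auto A \<Longrightarrow> u \<one> = \<one>"
  using group_hom.hom_one[OF auto_group_hom] by blast

lemma auto_inv [simp]: "u \<in> auto A \<Longrightarrow> a \<in> carrier A \<Longrightarrow> u (inv a) = inv (u a)"
  using group_hom.hom_inv[OF auto_group_hom] by blast

lemma auto_eqI: "u \<in> auto A \<Longrightarrow> v \<in> auto A \<Longrightarrow> (\<And>a. a \<in> carrier A \<Longrightarrow> u a = v a) \<Longrightarrow> u = v"
  by (rule extensionalityI) (auto simp: auto_def Bij_def)

lemma auto_inv_auto [simp]: "g \<in> auto A \<Longrightarrow> inv\<^bsub>Aut\<^esub> g \<in> auto A"
  using Aut.inv_closed carrier_Aut by auto

lemma auto_mult_auto [simp]: "g \<in> auto A \<Longrightarrow> h \<in> auto A \<Longrightarrow> g \<otimes>\<^bsub>Aut\<^esub> h \<in> auto A"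
  using Aut.m_closed carrier_Aut by auto

lemma idA_auto [simp]: "idA \<in> auto A"
  using Aut.one_closed carrier_Aut by auto

lemma auto_l_one [simp]: "u \<in> auto A \<Longrightarrow> idA \<otimes>\<^bsub>Aut\<^esub> u = u"
  using Aut.l_one carrier_Aut by auto

lemma auto_r_one [simp]: "u \<in> auto A \<Longrightarrow> u \<otimes>\<^bsub>Aut\<^esub> idA = u"
  using Aut.r_one carrier_Aut by auto

lemma auto_apply_inv_apply [simp]: "g \<in> auto A \<Longrightarrow> a \<in> carrier A \<Longrightarrow> g ((inv\<^bsub>Aut\<^esub> g) a) = a"
  using Aut_mult_apply[of g "inv\<^bsub>Aut\<^esub> g" a] Aut.r_inv[of g] by (simp add: carrier_Aut)

lemma auto_inv_apply_apply [simp]: "g \<in> auto A \<Longrightarrow> a \<in> carrier A \<Longrightarrow> (inv\<^bsub>Aut\<^esub> g) (g a) = a"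
  using Aut_mult_apply[of "inv\<^bsub>Aut\<^esub> g" g a] Aut.l_inv[of g] by (simp add: carrier_Aut)

lemma U_auto [simp]: "u \<in> U \<Longrightarrow> u \<in> auto A"
  using subgroup.subset[OF subgroup_U] carrier_Aut by blast

lemma U_mult [simp]: "u \<in> U \<Longrightarrow> v \<in> U \<Longrightarrow> u \<otimes>\<^bsub>Aut\<^esub> v \<in> U"
  using subgroup.m_closed[OF subgroup_U] by blast

lemma U_inv [simp]: "u \<in> U \<Longrightarrow> inv\<^bsub>Aut\<^esub> u \<in> U"
  using subgroup.m_inv_closed[OF subgroup_U] by blast

lemma U_one [simp]: "idA \<in> U"
  using subgroup.one_closed[OF subgroup_U] by blast

lemma U_mult_apply [simp]: "u \<in> U \<Longrightarrow> v \<in> U \<Longrightarrow> a \<in> carrier A \<Longrightarrow> (u \<otimes>\<^bsub>Aut\<^esub> v) a = u (v a)"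
  by (simp add: Aut_mult_apply)

lemma cocycle_closed [simp]: "u \<in> U \<Longrightarrow> v \<in> U \<Longrightarrow> \<delta> u v \<in> carrier A"
  using cocycle_\<delta> by (simp add: Z2_def)

lemma cocycle_identity:
  "u \<in> U \<Longrightarrow> v \<in> U \<Longrightarrow> w \<in> U \<Longrightarrow>
   \<delta> u v \<otimes> \<delta> (u \<otimes>\<^bsub>Aut\<^esub> v) w = u (\<delta> v w) \<otimes> \<delta> u (v \<otimes>\<^bsub>Aut\<^esub> w)"
  using cocycle_\<delta> by (simp add: Z2_def)

text \<open>Not simp rules: \<open>\<delta>\<^sub>1\<close> is itself an instance of their left-hand sides.\<close>

lemma cocycle_idA_left: "v \<in> U \<Longrightarrow> \<delta> idA v = \<delta>\<^sub>1"
  using cocycle_identity[of idA idA v] by (simp add: r_cancel)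

lemma cocycle_idA_right: "u \<in> U \<Longrightarrow> \<delta> u idA = u \<delta>\<^sub>1"
  using cocycle_identity[of u idA idA] by (simp add: r_cancel)

lemma ext_carrier: "carrier G\<delta> = carrier A \<times> U"
  by (simp add: ext_group_def)

lemma ext_mult [simp]: "(a, u) \<otimes>\<^bsub>G\<delta>\<^esub> (b, v) = (a \<otimes> u b \<otimes> \<delta> u v, u \<otimes>\<^bsub>Aut\<^esub> v)"
  by (simp add: ext_group_def)

lemma ext_one: "\<one>\<^bsub>G\<delta>\<^esub> = (inv \<delta>\<^sub>1, idA)"
  by (simp add: ext_group_def)

lemma group_ext_group: "group G\<delta>"
proof (rule groupI)
  fix x y assume "x \<in> carrier G\<delta>" "y \<in> carrier G\<delta>"
  then show "x \<otimes>\<^bsub>G\<delta>\<^esub> y \<in> carrier G\<delta>" by (auto simp: ext_carrier)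
next
  show "\<one>\<^bsub>G\<delta>\<^esub> \<in> carrier G\<delta>" by (simp add: ext_one ext_carrier)
next
  fix x y z assume "x \<in> carrier G\<delta>" "y \<in> carrier G\<delta>" "z \<in> carrier G\<delta>"
  then obtain a u b v c w where xyz: "x = (a, u)" "y = (b, v)" "z = (c, w)"
    and in_A: "a \<in> carrier A" "b \<in> carrier A" "c \<in> carrier A" and in_U: "u \<in> U" "v \<in> U" "w \<in> U"
    by (auto simp: ext_carrier)
  have "x \<otimes>\<^bsub>G\<delta>\<^esub> y \<otimes>\<^bsub>G\<delta>\<^esub> z
      = ((a \<otimes> u b \<otimes> \<delta> u v) \<otimes> (u \<otimes>\<^bsub>Aut\<^esub> v) c \<otimes> \<delta> (u \<otimes>\<^bsub>Aut\<^esub> v) w, (u \<otimes>\<^bsub>Aut\<^esub> v) \<otimes>\<^bsub>Aut\<^esub> w)"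
    using xyz by simp
  also have "\<dots> = (a \<otimes> u b \<otimes> u (v c) \<otimes> (\<delta> u v \<otimes> \<delta> (u \<otimes>\<^bsub>Aut\<^esub> v) w), u \<otimes>\<^bsub>Aut\<^esub> (v \<otimes>\<^bsub>Aut\<^esub> w))"
    using in_A in_U by (simp add: m_ac Aut.m_assoc carrier_Aut)
  also have "\<dots> = (a \<otimes> u b \<otimes> u (v c) \<otimes> (u (\<delta> v w) \<otimes> \<delta> u (v \<otimes>\<^bsub>Aut\<^esub> w)), u \<otimes>\<^bsub>Aut\<^esub> (v \<otimes>\<^bsub>Aut\<^esub> w))"
    using in_U by (simp add: cocycle_identity)
  also have "\<dots> = x \<otimes>\<^bsub>G\<delta>\<^esub> (y \<otimes>\<^bsub>G\<delta>\<^esub> z)"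
    using xyz in_A in_U by (simp add: m_ac)
  finally show "x \<otimes>\<^bsub>G\<delta>\<^esub> y \<otimes>\<^bsub>G\<delta>\<^esub> z = x \<otimes>\<^bsub>G\<delta>\<^esub> (y \<otimes>\<^bsub>G\<delta>\<^esub> z)" .
next
  fix x assume "x \<in> carrier G\<delta>"
  then obtain a u where x: "x = (a, u)" "a \<in> carrier A" "u \<in> U" by (auto simp: ext_carrier)
  then show "\<one>\<^bsub>G\<delta>\<^esub> \<otimes>\<^bsub>G\<delta>\<^esub> x = x"
    by (simp add: ext_one cocycle_idA_left[of u] m_ac)
  let ?u' = "inv\<^bsub>Aut\<^esub> u"
  let ?y = "(inv \<delta>\<^sub>1 \<otimes> inv (?u' a \<otimes> \<delta> ?u' u), ?u')"
  have "?y \<otimes>\<^bsub>G\<delta>\<^esub> x = \<one>\<^bsub>G\<delta>\<^esub>"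
    using x by (simp add: ext_one m_assoc carrier_Aut)
  moreover have "?y \<in> carrier G\<delta>"
    using x by (simp add: ext_carrier)
  ultimately show "\<exists>y\<in>carrier G\<delta>. y \<otimes>\<^bsub>G\<delta>\<^esub> x = \<one>\<^bsub>G\<delta>\<^esub>" by blast
qed

end

sublocale cocycle_extension \<subseteq> G\<delta>: group "ext_group A U \<delta>"
  by (rule group_ext_group)

context cocycle_extension
begin

lemma ext_emb_eq: "\<iota> a = (a \<otimes> inv \<delta>\<^sub>1, idA)"
  by (simp add: ext_emb_def)

lemma ext_emb_closed [simp]: "a \<in> carrier A \<Longrightarrow> \<iota> a \<in> carrier G\<delta>"
  by (simp add: ext_emb_eq ext_carrier)

lemma ext_emb_mult: "a \<in> carrier A \<Longrightarrow> b \<in> carrier A \<Longrightarrow> \<iota> (a \<otimes> b) = \<iota> a \<otimes>\<^bsub>G\<delta>\<^esub> \<iota> b"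
  by (simp add: ext_emb_eq m_ac)

lemma group_hom_ext_emb: "group_hom A G\<delta> \<iota>"
  by (auto simp: group_hom_def group_hom_axioms_def is_group intro!: homI ext_emb_mult)

lemma inj_on_ext_emb: "inj_on \<iota> (carrier A)"
  by (rule inj_onI) (simp add: ext_emb_eq)

lemma ext_emb_shift: "a \<in> carrier A \<Longrightarrow> \<iota> (a \<otimes> \<delta>\<^sub>1) = (a, idA)"
  by (simp add: ext_emb_eq m_assoc)

lemma ext_emb_image: "\<iota> ` carrier A = carrier A \<times> {idA}"
proof
  show "\<iota> ` carrier A \<subseteq> carrier A \<times> {idA}" by (auto simp: ext_emb_eq)
  show "carrier A \<times> {idA} \<subseteq> \<iota> ` carrier A"
  proof
    fix p assume "p \<in> carrier A \<times> {idA}"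
    then obtain a where "p = (a, idA)" "a \<in> carrier A" by auto
    then show "p \<in> \<iota> ` carrier A" using ext_emb_shift[of a] by (metis image_eqI m_closed cocycle_closed U_one)
  qed
qed

lemma ext_emb_mult_left: "c \<in> carrier A \<Longrightarrow> a \<in> carrier A \<Longrightarrow> w \<in> U \<Longrightarrow> \<iota> c \<otimes>\<^bsub>G\<delta>\<^esub> (a, w) = (c \<otimes> a, w)"
  by (simp add: ext_emb_eq cocycle_idA_left[of w] m_ac)

lemma ext_conj_emb:
  "b \<in> carrier A \<Longrightarrow> v \<in> U \<Longrightarrow> a \<in> carrier A \<Longrightarrow> (b, v) \<otimes>\<^bsub>G\<delta>\<^esub> \<iota> a = \<iota> (v a) \<otimes>\<^bsub>G\<delta>\<^esub> (b, v)"
  by (simp add: ext_emb_mult_left) (simp add: ext_emb_eq cocycle_idA_right[of v] m_ac)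

lemma group_hom_snd: "group_hom G\<delta> Aut snd"
  by (auto simp: group_hom_def group_hom_axioms_def Aut.is_group ext_carrier carrier_Aut intro!: homI)

lemma normal_ext_emb_image: "carrier A \<times> {idA} \<lhd> G\<delta>"
proof -
  have "kernel G\<delta> Aut snd = carrier A \<times> {idA}"
    by (auto simp: kernel_def ext_carrier)
  then show ?thesis using group_hom.normal_kernel[OF group_hom_snd] by simp
qed

lemma subgroup_ext_emb_preimage:
  assumes "subgroup M G\<delta>"
  shows "subgroup {b \<in> carrier A. \<iota> b \<in> M} A"
proof -
  interpret \<iota>: group_hom A G\<delta> \<iota> by (rule group_hom_ext_emb)
  show ?thesis
    using assms by (auto intro!: subgroupI simp: subgroup.m_closed subgroup.m_inv_closed subgroup.one_closed)
qed

lemma commutator_in_ext_emb_preimage: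
  assumes M: "M \<lhd> G\<delta>" and g: "g \<in> snd ` M" and a: "a \<in> carrier A"
  shows "g a \<otimes> inv a \<in> {b \<in> carrier A. \<iota> b \<in> M}"
proof -
  interpret \<iota>: group_hom A G\<delta> \<iota> by (rule group_hom_ext_emb)
  have M_sub: "M \<subseteq> carrier G\<delta>" using M by (simp add: normal_def subgroup.subset)
  obtain b where x: "(b, g) \<in> M" using g by force
  then have xG: "(b, g) \<in> carrier G\<delta>" and "b \<in> carrier A" "g \<in> U" using M_sub by (auto simp: ext_carrier)
  then have "\<iota> (g a) = (b, g) \<otimes>\<^bsub>G\<delta>\<^esub> \<iota> a \<otimes>\<^bsub>G\<delta>\<^esub> inv\<^bsub>G\<delta>\<^esub> (b, g)"
    using a ext_conj_emb[of b g a] by (simp add: G\<delta>.m_assoc)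
  then have "\<iota> (g a \<otimes> inv a) = (b, g) \<otimes>\<^bsub>G\<delta>\<^esub> (\<iota> a \<otimes>\<^bsub>G\<delta>\<^esub> inv\<^bsub>G\<delta>\<^esub> (b, g) \<otimes>\<^bsub>G\<delta>\<^esub> inv\<^bsub>G\<delta>\<^esub> (\<iota> a))"
    using a xG by (simp add: ext_emb_mult \<iota>.hom_inv G\<delta>.m_assoc \<open>g \<in> U\<close>)
  also have "\<dots> \<in> M"
    using x a M normal.inv_op_closed2[OF M, of "\<iota> a" "inv\<^bsub>G\<delta>\<^esub> (b, g)"]
    by (simp add: normal_imp_subgroup subgroup.m_closed subgroup.m_inv_closed)
  finally show ?thesis using a \<open>g \<in> U\<close> by simp
qed

lemma abelian_fixes_ext_emb_preimage:
  assumes M_sub: "M \<subseteq> carrier G\<delta>"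
    and abelian: "\<And>x y. x \<in> M \<Longrightarrow> y \<in> M \<Longrightarrow> x \<otimes>\<^bsub>G\<delta>\<^esub> y = y \<otimes>\<^bsub>G\<delta>\<^esub> x"
    and g: "g \<in> snd ` M" and b: "b \<in> carrier A" "\<iota> b \<in> M"
  shows "g b = b"
proof -
  obtain c where x: "(c, g) \<in> M" using g by force
  then have xG: "(c, g) \<in> carrier G\<delta>" and "c \<in> carrier A" "g \<in> U" using M_sub by (auto simp: ext_carrier)
  then have "\<iota> (g b) \<otimes>\<^bsub>G\<delta>\<^esub> (c, g) = \<iota> b \<otimes>\<^bsub>G\<delta>\<^esub> (c, g)"
    using ext_conj_emb[of c g b] abelian[OF x b(2)] b by simp
  then have "\<iota> (g b) = \<iota> b" using xG b \<open>g \<in> U\<close> by (simp add: G\<delta>.r_cancel)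
  then show ?thesis using inj_on_ext_emb b \<open>g \<in> U\<close> by (simp add: inj_on_def)
qed

lemma normal_snd_image:
  assumes M: "M \<lhd> G\<delta>"
  shows "snd ` M \<lhd> Aut\<lparr>carrier := U\<rparr>"
proof -
  interpret snd: group_hom G\<delta> Aut snd by (rule group_hom_snd)
  have M_sub: "M \<subseteq> carrier G\<delta>" using M by (simp add: normal_def subgroup.subset)
  then have "snd ` M \<subseteq> U" by (auto simp: ext_carrier)
  moreover have "subgroup (snd ` M) Aut"
    by (rule snd.subgroup_img_is_subgroup[OF normal_imp_subgroup[OF M]])
  moreover have "v \<otimes>\<^bsub>Aut\<^esub> snd x \<otimes>\<^bsub>Aut\<^esub> inv\<^bsub>Aut\<^esub> v \<in> snd ` M" if "v \<in> U" "x \<in> M" for v x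
  proof -
    have "(\<one>, v) \<in> carrier G\<delta>" "x \<in> carrier G\<delta>" using that M_sub by (auto simp: ext_carrier)
    then have "v \<otimes>\<^bsub>Aut\<^esub> snd x \<otimes>\<^bsub>Aut\<^esub> inv\<^bsub>Aut\<^esub> v = snd ((\<one>, v) \<otimes>\<^bsub>G\<delta>\<^esub> x \<otimes>\<^bsub>G\<delta>\<^esub> inv\<^bsub>G\<delta>\<^esub> (\<one>, v))"
      by (simp add: snd.hom_mult snd.hom_inv)
    then show ?thesis using normal.inv_op_closed2[OF M \<open>(\<one>, v) \<in> carrier G\<delta>\<close> \<open>x \<in> M\<close>] by blast
  qed
  ultimately show ?thesis
    using subgroup.subgroup_is_group[OF subgroup_U Aut.is_group]
    by (auto simp: group.normal_inv_iff Aut.subgroup_incl[OF _ subgroup_U]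
        Aut.m_inv_consistent[OF subgroup_U])
qed

lemma abelian_normal_centralizes_series:
  assumes M: "M \<lhd> G\<delta>"
    and abelian: "\<And>x y. x \<in> M \<Longrightarrow> y \<in> M \<Longrightarrow> x \<otimes>\<^bsub>G\<delta>\<^esub> y = y \<otimes>\<^bsub>G\<delta>\<^esub> x"
  shows "centralizes_series A (snd ` M)"
proof -
  have M_sub: "M \<subseteq> carrier G\<delta>" using M by (simp add: normal_def subgroup.subset)
  show ?thesis
  proof (rule centralizes_series_by_subgroup[OF subgroup_ext_emb_preimage[OF normal_imp_subgroup[OF M]]])
    show "snd ` M \<subseteq> auto A" using M_sub by (auto simp: ext_carrier)
    show "g a \<otimes> inv a \<in> {b \<in> carrier A. \<iota> b \<in> M}" if "g \<in> snd ` M" "a \<in> carrier A" for g a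
      using commutator_in_ext_emb_preimage[OF M that] .
    show "g b = b" if "g \<in> snd ` M" "b \<in> {b \<in> carrier A. \<iota> b \<in> M}" for g b
      using abelian_fixes_ext_emb_preimage[OF M_sub abelian] that by blast
  qed
qed

end

locale relevant_extension = cocycle_extension +
  assumes finite_A: "finite (carrier A)"
    and F_relevant_U: "F_relevant A U"

context relevant_extension
begin

lemma auto_ext_emb_image:
  assumes \<alpha>: "\<alpha> \<in> auto G\<delta>"
  shows "\<alpha> ` (carrier A \<times> {idA}) = carrier A \<times> {idA}"
proof -
  interpret \<alpha>: group_hom G\<delta> G\<delta> \<alpha> by (rule G\<delta>.auto_group_hom[OF \<alpha>])
  define M where "M = \<alpha> ` (carrier A \<times> {idA})"
  have M: "M \<lhd> G\<delta>"
    unfolding M_def by (rule G\<delta>.normal_auto_image[OF \<alpha> normal_ext_emb_image])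
  have M_eq: "M = \<alpha> ` \<iota> ` carrier A" by (simp add: M_def ext_emb_image)
  have abelian: "x \<otimes>\<^bsub>G\<delta>\<^esub> y = y \<otimes>\<^bsub>G\<delta>\<^esub> x" if xy: "x \<in> M" "y \<in> M" for x y
  proof -
    obtain a b where ab: "a \<in> carrier A" "b \<in> carrier A" "x = \<alpha> (\<iota> a)" "y = \<alpha> (\<iota> b)"
      using xy unfolding M_eq by blast
    then have "x \<otimes>\<^bsub>G\<delta>\<^esub> y = \<alpha> (\<iota> (a \<otimes> b))" by (simp add: ext_emb_mult)
    also have "\<dots> = \<alpha> (\<iota> (b \<otimes> a))" using ab by (simp add: m_comm[of a b])
    also have "\<dots> = y \<otimes>\<^bsub>G\<delta>\<^esub> x" using ab by (simp add: ext_emb_mult)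
    finally show ?thesis .
  qed
  have "snd ` M = {idA}"
    using F_relevant_U normal_snd_image[OF M] abelian_normal_centralizes_series[OF M abelian]
    unfolding F_relevant_def by blast
  moreover have "M \<subseteq> carrier G\<delta>" using M by (simp add: normal_def subgroup.subset)
  ultimately have "M \<subseteq> carrier A \<times> {idA}" by (force simp: ext_carrier)
  moreover have "card M = card (carrier A \<times> {idA})"
    unfolding M_def using inj_on_auto[OF \<alpha>] by (rule card_image[OF inj_on_subset]) (auto simp: ext_carrier)
  ultimately show ?thesis using finite_A card_subset_eq[of "carrier A \<times> {idA}" M] by (simp add: M_def)
qed

end

context cocycle_extension
begin

lemma cobound2_closed [simp]:
  "f \<in> U \<rightarrow> carrier A \<Longrightarrow> u \<in> U \<Longrightarrow> v \<in> U \<Longrightarrow> cobound2 A f u v \<in> carrier A"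
  by (simp add: cobound2_def Pi_iff)

lemma cobound2_mult:
  assumes "f \<in> U \<rightarrow> carrier A" "f' \<in> U \<rightarrow> carrier A" "u \<in> U" "v \<in> U"
  shows "cobound2 A (\<lambda>w. f w \<otimes> f' w) u v = cobound2 A f u v \<otimes> cobound2 A f' u v"
  using assms by (simp add: cobound2_def Pi_iff inv_mult m_ac)

lemma cobound2_inv:
  assumes "f \<in> U \<rightarrow> carrier A" "u \<in> U" "v \<in> U"
  shows "cobound2 A (\<lambda>w. inv (f w)) u v = inv (cobound2 A f u v)"
  using assms by (simp add: cobound2_def Pi_iff inv_mult m_ac)

lemma cobound2_Z1: "f \<in> Z1 A U \<Longrightarrow> u \<in> U \<Longrightarrow> v \<in> U \<Longrightarrow> cobound2 A f u v = \<one>"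
  by (simp add: Z1_def cobound2_def Pi_iff)

lemma H2class_subset:
  assumes f: "f \<in> U \<rightarrow> carrier A"
    and closed: "\<And>u v. u \<in> U \<Longrightarrow> v \<in> U \<Longrightarrow> \<delta>'' u v \<in> carrier A"
    and eq: "\<And>u v. u \<in> U \<Longrightarrow> v \<in> U \<Longrightarrow> \<delta>' u v = \<delta>'' u v \<otimes> cobound2 A f u v"
  shows "H2class A U \<delta>' \<subseteq> H2class A U \<delta>''"
proof
  fix d assume "d \<in> H2class A U \<delta>'"
  then obtain f' where f': "f' \<in> U \<rightarrow> carrier A" and d: "d \<in> Z2 A U"
    and d_eq: "\<And>u v. u \<in> U \<Longrightarrow> v \<in> U \<Longrightarrow> d u v = \<delta>' u v \<otimes> cobound2 A f' u v"
    by (auto simp: H2class_def)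
  have "d u v = \<delta>'' u v \<otimes> cobound2 A (\<lambda>w. f w \<otimes> f' w) u v" if "u \<in> U" "v \<in> U" for u v
    using that f f' by (simp add: d_eq eq cobound2_mult closed m_assoc)
  moreover have "(\<lambda>w. f w \<otimes> f' w) \<in> U \<rightarrow> carrier A" using f f' by auto
  ultimately show "d \<in> H2class A U \<delta>''" using d by (auto simp: H2class_def)
qed

lemma H2class_eq:
  assumes f: "f \<in> U \<rightarrow> carrier A"
    and closed: "\<And>u v. u \<in> U \<Longrightarrow> v \<in> U \<Longrightarrow> \<delta>'' u v \<in> carrier A"
    and eq: "\<And>u v. u \<in> U \<Longrightarrow> v \<in> U \<Longrightarrow> \<delta>' u v = \<delta>'' u v \<otimes> cobound2 A f u v"
  shows "H2class A U \<delta>' = H2class A U \<delta>''"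
proof
  show "H2class A U \<delta>' \<subseteq> H2class A U \<delta>''" using H2class_subset[OF f closed eq] .
  have "\<delta>'' u v = \<delta>' u v \<otimes> cobound2 A (\<lambda>w. inv (f w)) u v" if "u \<in> U" "v \<in> U" for u v
    using that f by (simp add: eq cobound2_inv closed m_assoc)
  then show "H2class A U \<delta>'' \<subseteq> H2class A U \<delta>'"
    using f closed by (intro H2class_subset[of "\<lambda>w. inv (f w)"]) (auto simp: eq)
qed

lemma cocycle_in_H2class: "\<delta> \<in> H2class A U \<delta>"
proof -
  have "\<delta> u v = \<delta> u v \<otimes> cobound2 A (\<lambda>w. \<one>) u v" if "u \<in> U" "v \<in> U" for u v
    using that by (simp add: cobound2_def)
  then show ?thesis using cocycle_\<delta> by (auto simp: H2class_def)
qed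

abbreviation cj :: "('a \<Rightarrow> 'a) \<Rightarrow> ('a \<Rightarrow> 'a) \<Rightarrow> 'a \<Rightarrow> 'a"
  where "cj g u \<equiv> g \<otimes>\<^bsub>Aut\<^esub> u \<otimes>\<^bsub>Aut\<^esub> inv\<^bsub>Aut\<^esub> g"

lemma NAut_auto: "g \<in> NAut A U \<Longrightarrow> g \<in> auto A"
  by (simp add: NAut_def)

lemma NAut_cj_closed: "g \<in> NAut A U \<Longrightarrow> u \<in> U \<Longrightarrow> cj g u \<in> U"
  by (auto simp: NAut_def)

lemma NAut_inv_cj_closed:
  assumes g: "g \<in> NAut A U" and u: "u \<in> U"
  shows "inv\<^bsub>Aut\<^esub> g \<otimes>\<^bsub>Aut\<^esub> u \<otimes>\<^bsub>Aut\<^esub> g \<in> U"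
proof -
  obtain w where "w \<in> U" "u = cj g w" using g u by (auto simp: NAut_def)
  then show ?thesis using NAut_auto[OF g] by (simp add: Aut.inv_conj_conj carrier_Aut)
qed

lemma cj_inv_cj [simp]: "g \<in> auto A \<Longrightarrow> u \<in> auto A \<Longrightarrow> cj g (inv\<^bsub>Aut\<^esub> g \<otimes>\<^bsub>Aut\<^esub> u \<otimes>\<^bsub>Aut\<^esub> g) = u"
  by (simp add: Aut.conj_inv_conj carrier_Aut)

lemma cj_apply: "g \<in> auto A \<Longrightarrow> u \<in> auto A \<Longrightarrow> b \<in> carrier A \<Longrightarrow> cj g u (g b) = g (u b)"
  by (simp add: Aut_mult_apply)

lemma act2_cj:
  "g \<in> auto A \<Longrightarrow> u \<in> U \<Longrightarrow> v \<in> U \<Longrightarrow> act2 A g \<delta> (cj g u) (cj g v) = g (\<delta> u v)"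
  by (simp add: act2_def Aut.inv_conj_conj carrier_Aut)

lemma act2_closed: "g \<in> NAut A U \<Longrightarrow> u \<in> U \<Longrightarrow> v \<in> U \<Longrightarrow> act2 A g \<delta> u v \<in> carrier A"
  by (simp add: act2_def NAut_inv_cj_closed NAut_auto)

lemma Stab_iff_twisted:
  "g \<in> Stab A U \<delta> \<longleftrightarrow> g \<in> NAut A U \<and>
     (\<exists>k\<in>U \<rightarrow> carrier A. \<forall>u\<in>U. \<forall>v\<in>U. act2 A g \<delta> u v = \<delta> u v \<otimes> cobound2 A k u v)"
proof (cases "g \<in> NAut A U")
  case True
  have "H2class A U (act2 A g \<delta>) = H2class A U \<delta> \<longleftrightarrow>
      (\<exists>k\<in>U \<rightarrow> carrier A. \<forall>u\<in>U. \<forall>v\<in>U. act2 A g \<delta> u v = \<delta> u v \<otimes> cobound2 A k u v)"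
  proof
    assume "H2class A U (act2 A g \<delta>) = H2class A U \<delta>"
    then have "\<delta> \<in> H2class A U (act2 A g \<delta>)" using cocycle_in_H2class by simp
    then obtain f where f: "f \<in> U \<rightarrow> carrier A"
      and eq: "\<And>u v. u \<in> U \<Longrightarrow> v \<in> U \<Longrightarrow> \<delta> u v = act2 A g \<delta> u v \<otimes> cobound2 A f u v"
      by (auto simp: H2class_def)
    have "act2 A g \<delta> u v = \<delta> u v \<otimes> cobound2 A (\<lambda>w. inv (f w)) u v" if "u \<in> U" "v \<in> U" for u v
      using that f True by (simp add: eq cobound2_inv act2_closed m_assoc)
    moreover have "(\<lambda>w. inv (f w)) \<in> U \<rightarrow> carrier A" using f by auto
    ultimately show "\<exists>k\<in>U \<rightarrow> carrier A. \<forall>u\<in>U. \<forall>v\<in>U. act2 A g \<delta> u v = \<delta> u v \<otimes> cobound2 A k u v"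
      by blast
  next
    assume "\<exists>k\<in>U \<rightarrow> carrier A. \<forall>u\<in>U. \<forall>v\<in>U. act2 A g \<delta> u v = \<delta> u v \<otimes> cobound2 A k u v"
    then show "H2class A U (act2 A g \<delta>) = H2class A U \<delta>"
      using H2class_eq[of _ \<delta> "act2 A g \<delta>"] by auto
  qed
  then show ?thesis using True by (simp add: Stab_def)
qed (simp add: Stab_def)

definition ext_lift :: "('a \<Rightarrow> 'a) \<Rightarrow> (('a \<Rightarrow> 'a) \<Rightarrow> 'a) \<Rightarrow> 'a \<times> ('a \<Rightarrow> 'a) \<Rightarrow> 'a \<times> ('a \<Rightarrow> 'a)"
  where "ext_lift g k = (\<lambda>x\<in>carrier G\<delta>. (g (fst x) \<otimes> k (cj g (snd x)), cj g (snd x)))"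

context
  fixes g k
  assumes g: "g \<in> NAut A U" and k: "k \<in> U \<rightarrow> carrier A"
    and twisted: "\<And>u v. u \<in> U \<Longrightarrow> v \<in> U \<Longrightarrow> act2 A g \<delta> u v = \<delta> u v \<otimes> cobound2 A k u v"
begin

lemma ext_lift_apply: "a \<in> carrier A \<Longrightarrow> u \<in> U \<Longrightarrow> ext_lift g k (a, u) = (g a \<otimes> k (cj g u), cj g u)"
  by (simp add: ext_lift_def ext_carrier)

lemma ext_lift_hom: "ext_lift g k \<in> hom G\<delta> G\<delta>"
proof (rule homI)
  have g_auto: "g \<in> auto A" using g by (rule NAut_auto)
  have kc: "k w \<in> carrier A" if "w \<in> U" for w using k that by auto
  fix x assume "x \<in> carrier G\<delta>"
  then show "ext_lift g k x \<in> carrier G\<delta>"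
    using g_auto kc NAut_cj_closed[OF g] by (auto simp: ext_lift_def ext_carrier)
next
  have g_auto: "g \<in> auto A" using g by (rule NAut_auto)
  have kc: "k w \<in> carrier A" if "w \<in> U" for w using k that by auto
  fix x y assume "x \<in> carrier G\<delta>" "y \<in> carrier G\<delta>"
  then obtain a u b v where xy: "x = (a, u)" "y = (b, v)" "a \<in> carrier A" "b \<in> carrier A" "u \<in> U" "v \<in> U"
    by (auto simp: ext_carrier)
  have cu: "cj g u \<in> U" "cj g v \<in> U" using xy NAut_cj_closed[OF g] by auto
  have cj_mult: "cj g (u \<otimes>\<^bsub>Aut\<^esub> v) = cj g u \<otimes>\<^bsub>Aut\<^esub> cj g v"
    using xy g_auto by (simp add: Aut.conj_mult carrier_Aut)
  have "g (\<delta> u v) = \<delta> (cj g u) (cj g v) \<otimes> cobound2 A k (cj g u) (cj g v)"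
    using twisted[OF cu] act2_cj[OF g_auto xy(5,6)] by simp
  then have "g (\<delta> u v) \<otimes> k (cj g u \<otimes>\<^bsub>Aut\<^esub> cj g v)
      = k (cj g u) \<otimes> cj g u (k (cj g v)) \<otimes> \<delta> (cj g u) (cj g v)"
    using cu kc by (simp add: cobound2_def m_ac)
  then show "ext_lift g k (x \<otimes>\<^bsub>G\<delta>\<^esub> y) = ext_lift g k x \<otimes>\<^bsub>G\<delta>\<^esub> ext_lift g k y"
    using xy cu kc g_auto by (simp add: ext_lift_apply cj_mult cj_apply m_ac)
qed

lemma ext_lift_auto: "ext_lift g k \<in> auto G\<delta>"
proof (rule autoI[OF ext_lift_hom])
  have g_auto: "g \<in> auto A" using g by (rule NAut_auto)
  have kc: "k w \<in> carrier A" if "w \<in> U" for w using k that by auto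
  show "inj_on (ext_lift g k) (carrier G\<delta>)"
  proof (rule inj_onI)
    fix x y assume "x \<in> carrier G\<delta>" "y \<in> carrier G\<delta>" and eq: "ext_lift g k x = ext_lift g k y"
    then obtain a u b v where xy: "x = (a, u)" "y = (b, v)" "a \<in> carrier A" "b \<in> carrier A" "u \<in> U" "v \<in> U"
      by (auto simp: ext_carrier)
    have "cj g u = cj g v" using eq xy by (simp add: ext_lift_apply)
    then have uv: "u = v" using xy g_auto by (simp add: carrier_Aut)
    then have "g a = g b" using eq xy g_auto kc NAut_cj_closed[OF g] by (simp add: ext_lift_apply)
    then have "a = b" using xy g_auto inj_on_auto[OF g_auto] by (simp add: inj_on_def)
    then show "x = y" using xy uv by simp
  qed
  show "ext_lift g k ` carrier G\<delta> = carrier G\<delta>"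
  proof
    show "ext_lift g k ` carrier G\<delta> \<subseteq> carrier G\<delta>" using ext_lift_hom by (auto simp: hom_def)
    show "carrier G\<delta> \<subseteq> ext_lift g k ` carrier G\<delta>"
    proof
      fix y assume "y \<in> carrier G\<delta>"
      then obtain b w where y: "y = (b, w)" "b \<in> carrier A" "w \<in> U" by (auto simp: ext_carrier)
      let ?x = "((inv\<^bsub>Aut\<^esub> g) (b \<otimes> inv (k w)), inv\<^bsub>Aut\<^esub> g \<otimes>\<^bsub>Aut\<^esub> w \<otimes>\<^bsub>Aut\<^esub> g)"
      have "?x \<in> carrier G\<delta>" using y g_auto kc NAut_inv_cj_closed[OF g] by (simp add: ext_carrier)
      moreover have "ext_lift g k ?x = y"
        using y g_auto kc NAut_inv_cj_closed[OF g] by (simp add: ext_lift_apply m_assoc)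
      ultimately show "y \<in> ext_lift g k ` carrier G\<delta>" by (metis image_eqI)
    qed
  qed
qed (simp add: ext_lift_def)

lemma restr_A_ext_lift: "restr_A A \<delta> (ext_lift g k) = g"
proof -
  have g_auto: "g \<in> auto A" using g by (rule NAut_auto)
  have k1: "k idA \<in> carrier A" using k by auto
  have "g \<delta>\<^sub>1 = \<delta>\<^sub>1 \<otimes> k idA"
    using twisted[of idA idA] act2_cj[OF g_auto, of idA idA] g_auto k1
    by (simp add: cobound2_def m_assoc carrier_Aut)
  then have "ext_lift g k (\<iota> a) = \<iota> (g a)" if "a \<in> carrier A" for a
    using that g_auto k1 by (simp add: ext_emb_eq ext_lift_apply carrier_Aut inv_mult m_ac)
  then show ?thesis
    unfolding restr_A_def using g_auto inj_on_ext_emb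
    by (intro extensionalityI[of _ "carrier A"]) (auto simp: inv_into_f_f auto_def Bij_def)
qed

end

end

context relevant_extension
begin

abbreviation "\<rho> \<equiv> restr_A A \<delta>"

lemma restr_A_apply:
  assumes \<alpha>: "\<alpha> \<in> auto G\<delta>" and a: "a \<in> carrier A"
  shows "\<rho> \<alpha> a \<in> carrier A" and "\<iota> (\<rho> \<alpha> a) = \<alpha> (\<iota> a)"
proof -
  have "\<alpha> (\<iota> a) \<in> \<iota> ` carrier A"
    using auto_ext_emb_image[OF \<alpha>] a unfolding ext_emb_image[symmetric] by blast
  then obtain b where b: "b \<in> carrier A" "\<alpha> (\<iota> a) = \<iota> b" by auto
  moreover have "\<rho> \<alpha> a = b" using a b inj_on_ext_emb by (simp add: restr_A_def)
  ultimately show "\<rho> \<alpha> a \<in> carrier A" and "\<iota> (\<rho> \<alpha> a) = \<alpha> (\<iota> a)" by simp_all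
qed

lemma restr_A_auto:
  assumes \<alpha>: "\<alpha> \<in> auto G\<delta>"
  shows "\<rho> \<alpha> \<in> auto A"
proof (rule autoI)
  note \<rho>_apply = restr_A_apply[OF \<alpha>]
  have \<iota>_eq: "\<iota> a = \<iota> b \<longleftrightarrow> a = b" if "a \<in> carrier A" "b \<in> carrier A" for a b
    using inj_on_ext_emb that by (auto simp: inj_on_def)
  show "\<rho> \<alpha> \<in> hom A A"
  proof (rule homI)
    fix a b assume "a \<in> carrier A" "b \<in> carrier A"
    then have "\<iota> (\<rho> \<alpha> (a \<otimes> b)) = \<iota> (\<rho> \<alpha> a \<otimes> \<rho> \<alpha> b)"
      using \<alpha> by (simp add: \<rho>_apply ext_emb_mult G\<delta>.auto_group_hom group_hom.hom_mult)
    then show "\<rho> \<alpha> (a \<otimes> b) = \<rho> \<alpha> a \<otimes> \<rho> \<alpha> b"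
      using \<open>a \<in> carrier A\<close> \<open>b \<in> carrier A\<close> by (metis \<iota>_eq \<rho>_apply(1) m_closed)
  qed (rule \<rho>_apply)
  show "inj_on (\<rho> \<alpha>) (carrier A)"
    using inj_on_auto[OF \<alpha>] by (auto intro!: inj_onI simp: inj_on_def \<iota>_eq[symmetric] \<rho>_apply)
  show "\<rho> \<alpha> ` carrier A = carrier A"
  proof
    show "\<rho> \<alpha> ` carrier A \<subseteq> carrier A" using \<rho>_apply by blast
    show "carrier A \<subseteq> \<rho> \<alpha> ` carrier A"
    proof
      fix b assume b: "b \<in> carrier A"
      then have "\<iota> b \<in> \<alpha> ` \<iota> ` carrier A"
        using auto_ext_emb_image[OF \<alpha>] by (simp add: ext_emb_image[symmetric])
      then obtain a where a: "a \<in> carrier A" "\<iota> b = \<alpha> (\<iota> a)" by auto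
      then have "\<iota> b = \<iota> (\<rho> \<alpha> a)" by (simp add: \<rho>_apply)
      then have "b = \<rho> \<alpha> a" using \<iota>_eq[OF b \<rho>_apply(1)[OF a(1)]] by simp
      then show "b \<in> \<rho> \<alpha> ` carrier A" using a by blast
    qed
  qed
qed (simp add: restr_A_def)

lemma restr_A_hom: "\<rho> \<in> hom (AutoGroup G\<delta>) Aut"
proof (rule homI)
  fix \<alpha> \<beta> assume "\<alpha> \<in> carrier (AutoGroup G\<delta>)" "\<beta> \<in> carrier (AutoGroup G\<delta>)"
  interpret Aut_G\<delta>: group "AutoGroup G\<delta>" by (rule G\<delta>.AutoGroup)
  have \<alpha>: "\<alpha> \<in> auto G\<delta>" and \<beta>: "\<beta> \<in> auto G\<delta>"
    using \<open>\<alpha> \<in> _\<close> \<open>\<beta> \<in> _\<close> by (simp_all add: carrier_AutoGroup)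
  then have \<alpha>\<beta>: "compose (carrier G\<delta>) \<alpha> \<beta> \<in> auto G\<delta>"
    using Aut_G\<delta>.m_closed[of \<alpha> \<beta>] by (simp add: carrier_AutoGroup mult_AutoGroup)
  have "\<rho> (compose (carrier G\<delta>) \<alpha> \<beta>) a = \<rho> \<alpha> (\<rho> \<beta> a)" if a: "a \<in> carrier A" for a
  proof -
    have "\<iota> (\<rho> (compose (carrier G\<delta>) \<alpha> \<beta>) a) = \<iota> (\<rho> \<alpha> (\<rho> \<beta> a))"
      using a \<alpha> \<beta> \<alpha>\<beta> by (simp add: restr_A_apply compose_def)
    then show ?thesis
      using a \<alpha> \<beta> \<alpha>\<beta> inj_on_ext_emb by (simp add: restr_A_apply inj_on_def)
  qed
  then show "\<rho> (\<alpha> \<otimes>\<^bsub>AutoGroup G\<delta>\<^esub> \<beta>) = \<rho> \<alpha> \<otimes>\<^bsub>Aut\<^esub> \<rho> \<beta>"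
    using \<alpha>\<beta> restr_A_auto[OF \<alpha>] restr_A_auto[OF \<beta>]
    by (intro auto_eqI) (simp_all add: mult_AutoGroup[OF \<alpha> \<beta>] restr_A_auto Aut_mult_apply)
qed (simp add: carrier_AutoGroup carrier_Aut restr_A_auto)

lemma snd_auto_ext:
  assumes \<alpha>: "\<alpha> \<in> auto G\<delta>" and x: "x \<in> carrier G\<delta>"
  shows "snd (\<alpha> x) = cj (\<rho> \<alpha>) (snd x)"
proof -
  interpret \<alpha>: group_hom G\<delta> G\<delta> \<alpha> by (rule G\<delta>.auto_group_hom[OF \<alpha>])
  obtain b u where bu: "x = (b, u)" "b \<in> carrier A" "u \<in> U" using x by (auto simp: ext_carrier)
  obtain b' u' where bu': "\<alpha> x = (b', u')" "b' \<in> carrier A" "u' \<in> U"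
    using \<alpha>.hom_closed[OF x] by (auto simp: ext_carrier)
  have g: "\<rho> \<alpha> \<in> auto A" by (rule restr_A_auto[OF \<alpha>])
  have "u' (\<rho> \<alpha> a) = \<rho> \<alpha> (u a)" if a: "a \<in> carrier A" for a
  proof -
    have "\<iota> (u' (\<rho> \<alpha> a)) \<otimes>\<^bsub>G\<delta>\<^esub> \<alpha> x = \<alpha> x \<otimes>\<^bsub>G\<delta>\<^esub> \<alpha> (\<iota> a)"
      using bu' a ext_conj_emb[of b' u' "\<rho> \<alpha> a"] by (simp add: restr_A_apply[OF \<alpha>])
    also have "\<dots> = \<alpha> (\<iota> (u a) \<otimes>\<^bsub>G\<delta>\<^esub> x)" using bu a x ext_conj_emb[of b u a] by (simp flip: \<alpha>.hom_mult)
    also have "\<dots> = \<iota> (\<rho> \<alpha> (u a)) \<otimes>\<^bsub>G\<delta>\<^esub> \<alpha> x" using bu a x by (simp add: restr_A_apply[OF \<alpha>])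
    finally have "\<iota> (u' (\<rho> \<alpha> a)) = \<iota> (\<rho> \<alpha> (u a))"
      using bu bu' a g x \<alpha>.hom_closed[OF x] by (simp add: restr_A_apply[OF \<alpha>] G\<delta>.r_cancel)
    then show ?thesis using inj_on_ext_emb a bu bu' g by (simp add: restr_A_apply[OF \<alpha>] inj_on_def)
  qed
  then have "u' \<otimes>\<^bsub>Aut\<^esub> \<rho> \<alpha> = \<rho> \<alpha> \<otimes>\<^bsub>Aut\<^esub> u"
    using bu bu' g by (intro auto_eqI) (simp_all add: Aut_mult_apply restr_A_apply[OF \<alpha>])
  then show ?thesis using bu bu' g by (simp add: Aut.eq_conj_if_mult_eq carrier_Aut)
qed

lemma restr_A_NAut:
  assumes \<alpha>: "\<alpha> \<in> auto G\<delta>"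
  shows "\<rho> \<alpha> \<in> NAut A U"
proof -
  have "cj (\<rho> \<alpha>) ` U = U"
  proof
    show "cj (\<rho> \<alpha>) ` U \<subseteq> U"
    proof (rule image_subsetI)
      fix u assume "u \<in> U"
      then have x: "(\<one>, u) \<in> carrier G\<delta>" by (simp add: ext_carrier)
      then have "cj (\<rho> \<alpha>) u = snd (\<alpha> (\<one>, u))" by (simp add: snd_auto_ext[OF \<alpha>])
      then show "cj (\<rho> \<alpha>) u \<in> U" using group_hom.hom_closed[OF G\<delta>.auto_group_hom[OF \<alpha>] x] by (auto simp: ext_carrier mem_Times_iff)
    qed
    show "U \<subseteq> cj (\<rho> \<alpha>) ` U"
    proof
      fix v assume v: "v \<in> U"
      then have "(\<one>, v) \<in> \<alpha> ` carrier G\<delta>" using auto_image_carrier[OF \<alpha>] by (simp add: ext_carrier)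
      then obtain x where x: "x \<in> carrier G\<delta>" "\<alpha> x = (\<one>, v)" by (metis imageE)
      then have "v = cj (\<rho> \<alpha>) (snd x)" using snd_auto_ext[OF \<alpha> x(1)] by simp
      moreover have "snd x \<in> U" using x(1) by (auto simp: ext_carrier)
      ultimately show "v \<in> cj (\<rho> \<alpha>) ` U" by (rule image_eqI)
    qed
  qed
  then show ?thesis using restr_A_auto[OF \<alpha>] by (simp add: NAut_def)
qed

lemma restr_A_cocycle_relation:
  assumes \<alpha>: "\<alpha> \<in> auto G\<delta>" and u: "u \<in> U" and v: "v \<in> U"
  defines "f \<equiv> \<lambda>w. fst (\<alpha> (\<one>, w))"
  shows "\<rho> \<alpha> (\<delta> u v) \<otimes> f (u \<otimes>\<^bsub>Aut\<^esub> v)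
      = f u \<otimes> cj (\<rho> \<alpha>) u (f v) \<otimes> \<delta> (cj (\<rho> \<alpha>) u) (cj (\<rho> \<alpha>) v)"
proof -
  interpret \<alpha>: group_hom G\<delta> G\<delta> \<alpha> by (rule G\<delta>.auto_group_hom[OF \<alpha>])
  have \<alpha>_section: "\<alpha> (\<one>, w) = (f w, cj (\<rho> \<alpha>) w)" "f w \<in> carrier A" if "w \<in> U" for w
    using that snd_auto_ext[OF \<alpha>, of "(\<one>, w)"] \<alpha>.hom_closed[of "(\<one>, w)"]
    by (auto simp: f_def ext_carrier prod_eq_iff mem_Times_iff)
  have cj_mult: "cj (\<rho> \<alpha>) (u \<otimes>\<^bsub>Aut\<^esub> v) = cj (\<rho> \<alpha>) u \<otimes>\<^bsub>Aut\<^esub> cj (\<rho> \<alpha>) v"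
    using u v restr_A_auto[OF \<alpha>] by (simp add: Aut.conj_mult carrier_Aut)
  have "\<alpha> (\<one>, u) \<otimes>\<^bsub>G\<delta>\<^esub> \<alpha> (\<one>, v) = \<alpha> ((\<one>, u) \<otimes>\<^bsub>G\<delta>\<^esub> (\<one>, v))"
    using u v by (intro \<alpha>.hom_mult[symmetric]) (simp_all add: ext_carrier)
  also have "(\<one>, u) \<otimes>\<^bsub>G\<delta>\<^esub> (\<one>, v) = \<iota> (\<delta> u v) \<otimes>\<^bsub>G\<delta>\<^esub> (\<one>, u \<otimes>\<^bsub>Aut\<^esub> v)"
    using u v by (simp add: ext_emb_mult_left)
  also have "\<alpha> \<dots> = \<alpha> (\<iota> (\<delta> u v)) \<otimes>\<^bsub>G\<delta>\<^esub> \<alpha> (\<one>, u \<otimes>\<^bsub>Aut\<^esub> v)"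
    using u v ext_emb_closed[of "\<delta> u v"] by (intro \<alpha>.hom_mult) (simp_all add: ext_carrier)
  also have "\<alpha> (\<iota> (\<delta> u v)) = \<iota> (\<rho> \<alpha> (\<delta> u v))"
    using u v by (simp add: restr_A_apply[OF \<alpha>])
  finally show ?thesis
    using u v \<alpha>_section NAut_cj_closed[OF restr_A_NAut[OF \<alpha>]] restr_A_apply(1)[OF \<alpha>]
    by (simp add: ext_emb_mult_left cj_mult)
qed

lemma restr_A_twisted:
  assumes \<alpha>: "\<alpha> \<in> auto G\<delta>"
  shows "\<exists>k\<in>U \<rightarrow> carrier A. \<forall>u\<in>U. \<forall>v\<in>U. act2 A (\<rho> \<alpha>) \<delta> u v = \<delta> u v \<otimes> cobound2 A k u v"
proof -
  let ?g = "\<rho> \<alpha>" and ?ci = "\<lambda>w. inv\<^bsub>Aut\<^esub> \<rho> \<alpha> \<otimes>\<^bsub>Aut\<^esub> w \<otimes>\<^bsub>Aut\<^esub> \<rho> \<alpha>"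
  have g: "?g \<in> NAut A U" and g_auto: "?g \<in> auto A" by (simp_all add: restr_A_NAut restr_A_auto \<alpha>)
  define f where "f = (\<lambda>w. fst (\<alpha> (\<one>, w)))"
  define k where "k = (\<lambda>w. f (?ci w))"
  interpret \<alpha>: group_hom G\<delta> G\<delta> \<alpha> by (rule G\<delta>.auto_group_hom[OF \<alpha>])
  have f: "f w \<in> carrier A" if "w \<in> U" for w
    using that \<alpha>.hom_closed[of "(\<one>, w)"] by (auto simp: f_def ext_carrier mem_Times_iff)
  have "act2 A ?g \<delta> u0 v0 = \<delta> u0 v0 \<otimes> cobound2 A k u0 v0" if u0: "u0 \<in> U" and v0: "v0 \<in> U" for u0 v0
  proof -
    define u v where "u = ?ci u0" and "v = ?ci v0"
    have uv: "u \<in> U" "v \<in> U" "u0 = cj ?g u" "v0 = cj ?g v"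
      using u0 v0 g g_auto by (simp_all add: u_def v_def NAut_inv_cj_closed)
    have k_cj: "k (cj ?g w) = f w" if "w \<in> U" for w
      using that g_auto by (simp add: k_def Aut.inv_conj_conj carrier_Aut)
    have u0v0: "u0 \<in> U" "v0 \<in> U" using u0 v0 .
    have "?g (\<delta> u v) \<otimes> f (u \<otimes>\<^bsub>Aut\<^esub> v) = f u \<otimes> u0 (f v) \<otimes> \<delta> u0 v0"
      using restr_A_cocycle_relation[OF \<alpha> uv(1,2)] uv by (simp add: f_def)
    then have "?g (\<delta> u v) = f u \<otimes> u0 (f v) \<otimes> \<delta> u0 v0 \<otimes> inv f (u \<otimes>\<^bsub>Aut\<^esub> v)"
      using uv(1,2) u0v0 f g_auto by (simp add: inv_solve_right)
    also have "k (u0 \<otimes>\<^bsub>Aut\<^esub> v0) = f (u \<otimes>\<^bsub>Aut\<^esub> v)"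
      using uv g_auto k_cj[of "u \<otimes>\<^bsub>Aut\<^esub> v"] by (simp add: Aut.conj_mult carrier_Aut)
    then have "f u \<otimes> u0 (f v) \<otimes> \<delta> u0 v0 \<otimes> inv f (u \<otimes>\<^bsub>Aut\<^esub> v) = \<delta> u0 v0 \<otimes> cobound2 A k u0 v0"
      using uv(1,2) u0v0 f k_cj[of u] k_cj[of v] by (simp add: cobound2_def uv(3,4)[symmetric] m_ac)
    finally show ?thesis using act2_cj[OF g_auto uv(1,2)] uv by simp
  qed
  moreover have "k \<in> U \<rightarrow> carrier A" using f g by (simp add: k_def NAut_inv_cj_closed)
  ultimately show ?thesis by blast
qed

lemma restr_A_image: "\<rho> ` auto G\<delta> = Stab A U \<delta>"
proof
  show "\<rho> ` auto G\<delta> \<subseteq> Stab A U \<delta>"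
    using restr_A_NAut restr_A_twisted by (auto simp: Stab_iff_twisted)
  show "Stab A U \<delta> \<subseteq> \<rho> ` auto G\<delta>"
  proof
    fix g assume "g \<in> Stab A U \<delta>"
    then obtain k where g: "g \<in> NAut A U" and k: "k \<in> U \<rightarrow> carrier A"
      and twisted: "\<And>u v. u \<in> U \<Longrightarrow> v \<in> U \<Longrightarrow> act2 A g \<delta> u v = \<delta> u v \<otimes> cobound2 A k u v"
      by (auto simp: Stab_iff_twisted)
    show "g \<in> \<rho> ` auto G\<delta>"
      using ext_lift_auto[OF g k twisted] restr_A_ext_lift[OF g k twisted] by (metis image_eqI)
  qed
qed

end

context cocycle_extension
begin

lemma idA_NAut: "idA \<in> NAut A U"
  by (simp add: NAut_def carrier_Aut)

lemma act2_idA: "u \<in> U \<Longrightarrow> v \<in> U \<Longrightarrow> act2 A idA \<delta> u v = \<delta> u v"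
  by (simp add: act2_def carrier_Aut)

lemma ext_lift_Z1:
  assumes k: "k \<in> Z1 A U"
  shows "ext_lift idA k \<in> auto G\<delta>" "restr_A A \<delta> (ext_lift idA k) = idA"
    and "\<And>a u. a \<in> carrier A \<Longrightarrow> u \<in> U \<Longrightarrow> ext_lift idA k (a, u) = (a \<otimes> k u, u)"
proof -
  have k_Pi: "k \<in> U \<rightarrow> carrier A" using k by (simp add: Z1_def)
  have twisted: "act2 A idA \<delta> u v = \<delta> u v \<otimes> cobound2 A k u v" if "u \<in> U" "v \<in> U" for u v
    using that k by (simp add: act2_idA cobound2_Z1)
  show "ext_lift idA k \<in> auto G\<delta>" by (rule ext_lift_auto[OF idA_NAut k_Pi twisted])
  show "restr_A A \<delta> (ext_lift idA k) = idA" by (rule restr_A_ext_lift[OF idA_NAut k_Pi twisted])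
  show "ext_lift idA k (a, u) = (a \<otimes> k u, u)" if "a \<in> carrier A" "u \<in> U" for a u
    using that k_Pi ext_lift_apply[OF idA_NAut k_Pi twisted that] by (simp add: carrier_Aut)
qed

definition cocycle_of :: "('a \<times> ('a \<Rightarrow> 'a) \<Rightarrow> 'a \<times> ('a \<Rightarrow> 'a)) \<Rightarrow> ('a \<Rightarrow> 'a) \<Rightarrow> 'a"
  where "cocycle_of \<alpha> = (\<lambda>u\<in>U. fst (\<alpha> (\<one>, u)))"

end

context relevant_extension
begin

abbreviation "K \<equiv> kernel (AutoGroup G\<delta>) Aut \<rho>"

lemma kernel_restr_A_iff: "\<alpha> \<in> K \<longleftrightarrow> \<alpha> \<in> auto G\<delta> \<and> \<rho> \<alpha> = idA"
  by (simp add: kernel_def carrier_AutoGroup)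

lemma kernel_apply:
  assumes \<alpha>: "\<alpha> \<in> K" and a: "a \<in> carrier A" and u: "u \<in> U"
  shows "\<alpha> (a, u) = (a \<otimes> cocycle_of \<alpha> u, u)" and "cocycle_of \<alpha> u \<in> carrier A"
proof -
  have \<alpha>_auto: "\<alpha> \<in> auto G\<delta>" and \<rho>\<alpha>: "\<rho> \<alpha> = idA" using \<alpha> by (simp_all add: kernel_restr_A_iff)
  interpret \<alpha>: group_hom G\<delta> G\<delta> \<alpha> by (rule G\<delta>.auto_group_hom[OF \<alpha>_auto])
  have x: "(\<one>, u) \<in> carrier G\<delta>" using u by (simp add: ext_carrier)
  have "snd (\<alpha> (\<one>, u)) = u" using snd_auto_ext[OF \<alpha>_auto x] u \<rho>\<alpha> by (simp add: carrier_Aut)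
  moreover have "fst (\<alpha> (\<one>, u)) \<in> carrier A" using \<alpha>.hom_closed[OF x] by (auto simp: ext_carrier)
  ultimately have \<alpha>_one: "\<alpha> (\<one>, u) = (cocycle_of \<alpha> u, u)" and c: "cocycle_of \<alpha> u \<in> carrier A"
    using u by (simp_all add: cocycle_of_def prod_eq_iff)
  then show "cocycle_of \<alpha> u \<in> carrier A" by simp
  have "\<alpha> (a, u) = \<alpha> (\<iota> a \<otimes>\<^bsub>G\<delta>\<^esub> (\<one>, u))" using a u by (simp add: ext_emb_mult_left)
  also have "\<dots> = \<iota> a \<otimes>\<^bsub>G\<delta>\<^esub> (cocycle_of \<alpha> u, u)"
    using a x \<alpha>_one restr_A_apply(2)[OF \<alpha>_auto a] \<rho>\<alpha> by simp
  also have "\<dots> = (a \<otimes> cocycle_of \<alpha> u, u)" using a u c by (simp add: ext_emb_mult_left)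
  finally show "\<alpha> (a, u) = (a \<otimes> cocycle_of \<alpha> u, u)" .
qed

lemma cocycle_of_Z1:
  assumes \<alpha>: "\<alpha> \<in> K"
  shows "cocycle_of \<alpha> \<in> Z1 A U"
proof -
  have \<alpha>_auto: "\<alpha> \<in> auto G\<delta>" using \<alpha> by (simp add: kernel_restr_A_iff)
  interpret \<alpha>: group_hom G\<delta> G\<delta> \<alpha> by (rule G\<delta>.auto_group_hom[OF \<alpha>_auto])
  note c = kernel_apply(2)[OF \<alpha> one_closed]
  have "cocycle_of \<alpha> (u \<otimes>\<^bsub>Aut\<^esub> v) = cocycle_of \<alpha> u \<otimes> u (cocycle_of \<alpha> v)" if u: "u \<in> U" and v: "v \<in> U" for u v
  proof -
    have "(\<delta> u v \<otimes> cocycle_of \<alpha> (u \<otimes>\<^bsub>Aut\<^esub> v), u \<otimes>\<^bsub>Aut\<^esub> v) = \<alpha> ((\<one>, u) \<otimes>\<^bsub>G\<delta>\<^esub> (\<one>, v))"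
      using u v by (simp add: kernel_apply[OF \<alpha>])
    also have "\<dots> = (cocycle_of \<alpha> u \<otimes> u (cocycle_of \<alpha> v) \<otimes> \<delta> u v, u \<otimes>\<^bsub>Aut\<^esub> v)"
      using u v by (simp add: ext_carrier kernel_apply[OF \<alpha>] del: ext_mult) (simp add: c)
    finally show ?thesis using u v c by (simp add: m_ac)
  qed
  then show ?thesis using c by (auto simp: Z1_def cocycle_of_def)
qed

lemma cocycle_of_compose:
  assumes \<alpha>: "\<alpha> \<in> K" and \<beta>: "\<beta> \<in> K"
  shows "cocycle_of (compose (carrier G\<delta>) \<alpha> \<beta>) = cocycle_of \<alpha> \<otimes>\<^bsub>Z1_group A U\<^esub> cocycle_of \<beta>"
proof (rule extensionalityI[of _ U])
  fix u assume u: "u \<in> U"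
  have "compose (carrier G\<delta>) \<alpha> \<beta> (\<one>, u) = \<alpha> (cocycle_of \<beta> u, u)"
    using u kernel_apply[OF \<beta> one_closed u] by (simp add: compose_def ext_carrier)
  also have "\<dots> = (cocycle_of \<beta> u \<otimes> cocycle_of \<alpha> u, u)"
    using u kernel_apply[OF \<alpha> _ u] kernel_apply(2)[OF \<beta> one_closed u] by simp
  finally show "cocycle_of (compose (carrier G\<delta>) \<alpha> \<beta>) u = (cocycle_of \<alpha> \<otimes>\<^bsub>Z1_group A U\<^esub> cocycle_of \<beta>) u"
    using u kernel_apply(2)[OF \<alpha> one_closed u] kernel_apply(2)[OF \<beta> one_closed u]
    by (simp add: cocycle_of_def Z1_group_def m_comm)
qed (simp_all add: cocycle_of_def Z1_group_def)

lemma inj_on_cocycle_of: "inj_on cocycle_of K"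
proof (rule inj_onI)
  fix \<alpha> \<beta> assume \<alpha>: "\<alpha> \<in> K" and \<beta>: "\<beta> \<in> K" and eq: "cocycle_of \<alpha> = cocycle_of \<beta>"
  then have "\<alpha> \<in> extensional (carrier G\<delta>)" "\<beta> \<in> extensional (carrier G\<delta>)"
    by (auto simp: kernel_restr_A_iff auto_def Bij_def)
  then show "\<alpha> = \<beta>"
    using kernel_apply(1)[OF \<alpha>] kernel_apply(1)[OF \<beta>] eq
    by (intro extensionalityI[of _ "carrier G\<delta>"]) (auto simp: ext_carrier)
qed

lemma cocycle_of_image: "cocycle_of ` K = Z1 A U"
proof
  show "cocycle_of ` K \<subseteq> Z1 A U" using cocycle_of_Z1 by blast
  show "Z1 A U \<subseteq> cocycle_of ` K"
  proof
    fix k assume k: "k \<in> Z1 A U"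
    then have "ext_lift idA k \<in> K" using ext_lift_Z1 by (simp add: kernel_restr_A_iff)
    moreover have "cocycle_of (ext_lift idA k) = k"
      using k by (intro extensionalityI[of _ U]) (auto simp: cocycle_of_def ext_lift_Z1(3) Z1_def Pi_iff)
    ultimately show "k \<in> cocycle_of ` K" by (metis image_eqI)
  qed
qed

lemma kernel_iso: "AutoGroup G\<delta>\<lparr>carrier := K\<rparr> \<cong> Z1_group A U"
proof (rule is_isoI, rule isoI)
  show "cocycle_of \<in> hom (AutoGroup G\<delta>\<lparr>carrier := K\<rparr>) (Z1_group A U)"
    using cocycle_of_Z1 cocycle_of_compose
    by (intro homI) (auto simp: Z1_group_def mult_AutoGroup kernel_restr_A_iff)
  show "bij_betw cocycle_of (carrier (AutoGroup G\<delta>\<lparr>carrier := K\<rparr>)) (carrier (Z1_group A U))"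
    using inj_on_cocycle_of cocycle_of_image by (simp add: bij_betw_def Z1_group_def)
qed

end

theorem theorem3p6:
  fixes A :: "('a, 'b) monoid_scheme" and U :: "('a \<Rightarrow> 'a) set"
    and \<delta> :: "('a \<Rightarrow> 'a) \<Rightarrow> ('a \<Rightarrow> 'a) \<Rightarrow> 'a"
  assumes "fin_prod_elem_abelian A"
    and "subgroup U (AutoGroup A)"
    and "F_relevant A U"
    and "\<delta> \<in> Z2 A U"
  shows "(\<forall>\<alpha>\<in>auto (ext_group A U \<delta>).
            \<alpha> ` (ext_emb A \<delta> ` carrier A) = ext_emb A \<delta> ` carrier A)
       \<and> restr_A A \<delta> \<in> hom (AutoGroup (ext_group A U \<delta>)) (AutoGroup A)
       \<and> restr_A A \<delta> ` auto (ext_group A U \<delta>) = Stab A U \<delta>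
       \<and> (AutoGroup (ext_group A U \<delta>))
            \<lparr>carrier := kernel (AutoGroup (ext_group A U \<delta>)) (AutoGroup A) (restr_A A \<delta>)\<rparr>
          \<cong> Z1_group A U"
proof -
  interpret relevant_extension A U \<delta>
    using assms by (simp add: relevant_extension_def relevant_extension_axioms_def
        cocycle_extension_def fin_prod_elem_abelian_def)
  show ?thesis
    using auto_ext_emb_image restr_A_hom restr_A_image kernel_iso by (simp add: ext_emb_image)
qed

end
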